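(* The total number of Euclidean self-dual linear codes of length $n$ over $R$ is $$\Big(\sum_{k=0}^{\lfloor n/2\rfloor}\nu_{n,k}\,2^{k(k+1)/2}\Big)^2,$$ where $\nu_{n,k}$ is the number of binary $[n,k]$ linear codes that are Euclidean self-orthogonal and doubly-even (every codeword has Hamming weight divisible by $4$).
   Context: $R=\mathbb{Z}_4[v]/(v^2-v)$. A linear code of length $n$ over $R$ is an $R$-submodule $\mathcal{C}$ of $R^n$; it is Euclidean self-dual if $\mathcal{C}=\mathcal{C}^\perp$ where $\mathcal{C}^\perp=\{\mathbf{x}\in R^n:\sum_i x_ic_i=0\ \forall\mathbf{c}\in\mathcal{C}\}$. *)

theory Defs
  imports Main "HOL-Library.Numeral_Type" "HOL-Library.Product_Plus"
begin

text \<open>The ring R = Z4[v]/(v^2 - v): an element (a, b) :: 4 \<times> 4 stands for a + b v.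
  Addition and zero are componentwise (Product_Plus); multiplication uses v^2 = v.\<close>

type_synonym ring_R = "4 \<times> 4"

definition rmul :: "ring_R \<Rightarrow> ring_R \<Rightarrow> ring_R" where
  "rmul x y = (fst x * fst y, fst x * snd y + snd x * fst y + snd x * snd y)"

definition Rvecs :: "nat \<Rightarrow> (nat \<Rightarrow> ring_R) set" where
  "Rvecs n = {x. \<forall>i\<ge>n. x i = 0}"

definition Rip :: "nat \<Rightarrow> (nat \<Rightarrow> ring_R) \<Rightarrow> (nat \<Rightarrow> ring_R) \<Rightarrow> ring_R" where
  "Rip n x y = (\<Sum>i<n. rmul (x i) (y i))"

definition R_linear_code :: "nat \<Rightarrow> (nat \<Rightarrow> ring_R) set \<Rightarrow> bool" where
  "R_linear_code n C \<longleftrightarrow> C \<subseteq> Rvecs n \<and> (\<lambda>i. 0) \<in> C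
     \<and> (\<forall>x\<in>C. \<forall>y\<in>C. (\<lambda>i. x i + y i) \<in> C)
     \<and> (\<forall>r. \<forall>x\<in>C. (\<lambda>i. rmul r (x i)) \<in> C)"

definition R_dual :: "nat \<Rightarrow> (nat \<Rightarrow> ring_R) set \<Rightarrow> (nat \<Rightarrow> ring_R) set" where
  "R_dual n C = {x \<in> Rvecs n. \<forall>c\<in>C. Rip n x c = 0}"

definition R_self_dual_codes :: "nat \<Rightarrow> (nat \<Rightarrow> ring_R) set set" where
  "R_self_dual_codes n = {C. R_linear_code n C \<and> C = R_dual n C}"

definition Bvecs :: "nat \<Rightarrow> (nat \<Rightarrow> 2) set" where
  "Bvecs n = {x. \<forall>i\<ge>n. x i = 0}"

definition bin_linear_code :: "nat \<Rightarrow> (nat \<Rightarrow> 2) set \<Rightarrow> bool" where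
  "bin_linear_code n C \<longleftrightarrow> C \<subseteq> Bvecs n \<and> (\<lambda>i. 0) \<in> C
     \<and> (\<forall>x\<in>C. \<forall>y\<in>C. (\<lambda>i. x i + y i) \<in> C)"

definition bin_nk_code :: "nat \<Rightarrow> nat \<Rightarrow> (nat \<Rightarrow> 2) set \<Rightarrow> bool" where
  "bin_nk_code n k C \<longleftrightarrow> bin_linear_code n C \<and> card C = 2 ^ k"

definition bin_self_orthogonal :: "nat \<Rightarrow> (nat \<Rightarrow> 2) set \<Rightarrow> bool" where
  "bin_self_orthogonal n C \<longleftrightarrow> (\<forall>x\<in>C. \<forall>y\<in>C. (\<Sum>i<n. x i * y i) = 0)"

definition hamming_wt :: "nat \<Rightarrow> (nat \<Rightarrow> 2) \<Rightarrow> nat" where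
  "hamming_wt n x = card {i. i < n \<and> x i \<noteq> 0}"

definition doubly_even :: "nat \<Rightarrow> (nat \<Rightarrow> 2) set \<Rightarrow> bool" where
  "doubly_even n C \<longleftrightarrow> (\<forall>x\<in>C. 4 dvd hamming_wt n x)"

definition nu :: "nat \<Rightarrow> nat \<Rightarrow> nat" where
  "nu n k = card {C. bin_nk_code n k C \<and> bin_self_orthogonal n C \<and> doubly_even n C}"

end

theory Submission
  imports Defs "HOL-Library.Function_Algebras" "HOL-Library.FuncSet"
    "HOL-Computational_Algebra.Primes" Complex_Main
begin

text \<open>Since \<open>v\<close> is idempotent, \<open>a + b v \<mapsto> (a, a + b)\<close> is a ring isomorphism
  \<open>R \<cong> \<int>\<^sub>4 \<times> \<int>\<^sub>4\<close> under which the Euclidean form splits componentwise. Hence self-dual codes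
  over \<open>R\<close> are exactly products of two self-dual \<open>\<int>\<^sub>4\<close>-codes, and it suffices to show that
  there are \<open>\<Sum>\<^sub>k nu n k \<cdot> 2\<^bsup>k(k+1)/2\<^esup>\<close> self-dual \<open>\<int>\<^sub>4\<close>-codes of length \<open>n\<close>.

  A self-dual \<open>\<int>\<^sub>4\<close>-code \<open>C\<close> has \<open>2\<^sup>n\<close> elements, its residue code \<open>D = C mod 2\<close> is doubly-even
  and self-orthogonal of some dimension \<open>k \<le> n/2\<close>, and its torsion code is \<open>D\<^sup>\<bottom>\<close>. Let \<open>N(D)\<close> be
  the number of self-dual codes with residue \<open>D\<close>; we show \<open>N(D) = 2\<^bsup>k(k+1)/2\<^esup>\<close> by induction on
  \<open>k\<close>. For a hyperplane \<open>D'\<close> of \<open>D\<close> and \<open>v \<in> D - D'\<close>, adjoining a lift \<open>w\<close> of \<open>v\<close> to a code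
  with residue \<open>D'\<close> gives a code with residue \<open>D\<close>, and every such code \<open>C\<close> arises from exactly
  the lifts \<open>w \<in> C\<close>, i.e. \<open>|D\<^sup>\<bottom>|\<close> times. As \<open>v\<close> has \<open>2\<^sup>n\<close> lifts, \<open>N(D') 2\<^sup>n = N(D) |D\<^sup>\<bottom>|\<close>,
  that is \<open>N(D) = 2\<^bsup>k+1\<^esup> N(D')\<close>.\<close>

section \<open>Codes over a finite commutative ring\<close>

definition vecs :: "nat \<Rightarrow> (nat \<Rightarrow> 'a::zero) set" where
  "vecs n = {x. \<forall>i\<ge>n. x i = 0}"

definition dot :: "nat \<Rightarrow> (nat \<Rightarrow> 'a::comm_ring_1) \<Rightarrow> (nat \<Rightarrow> 'a) \<Rightarrow> 'a" where
  "dot n x y = (\<Sum>i<n. x i * y i)"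

definition dual :: "nat \<Rightarrow> (nat \<Rightarrow> 'a::comm_ring_1) set \<Rightarrow> (nat \<Rightarrow> 'a) set" where
  "dual n X = {x \<in> vecs n. \<forall>c\<in>X. dot n x c = 0}"

definition smul :: "'a::times \<Rightarrow> (nat \<Rightarrow> 'a) \<Rightarrow> (nat \<Rightarrow> 'a)" where
  "smul r x = (\<lambda>i. r * x i)"

definition code :: "nat \<Rightarrow> (nat \<Rightarrow> 'a::comm_ring_1) set \<Rightarrow> bool" where
  "code n C \<longleftrightarrow> C \<subseteq> vecs n \<and> 0 \<in> C \<and> (\<forall>x\<in>C. \<forall>y\<in>C. x + y \<in> C) \<and> (\<forall>r. \<forall>x\<in>C. smul r x \<in> C)"

lemma bij_betw_restrict_vecs:
  "bij_betw (\<lambda>x. restrict x {..<n}) (vecs n :: (nat \<Rightarrow> 'a::zero) set) (PiE {..<n} (\<lambda>_. UNIV))"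
proof (rule bij_betw_byWitness[where f' = "\<lambda>f i. if i < n then f i else 0"])
  show "\<forall>x\<in>vecs n. (\<lambda>i. if i < n then restrict x {..<n} i else 0) = x"
    by (auto simp: vecs_def fun_eq_iff)
  show "\<forall>f\<in>PiE {..<n} (\<lambda>_. UNIV). restrict (\<lambda>i. if i < n then f i else 0) {..<n} = (f :: nat \<Rightarrow> 'a)"
    by (auto simp: fun_eq_iff PiE_def extensional_def)
  show "(\<lambda>x. restrict x {..<n}) ` vecs n \<subseteq> PiE {..<n} (\<lambda>_. UNIV)"
    by (intro image_subsetI) (simp only: restrict_PiE_iff, simp)
  show "(\<lambda>f i. if i < n then f i else 0) ` PiE {..<n} (\<lambda>_. UNIV) \<subseteq> (vecs n :: (nat \<Rightarrow> 'a) set)"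
    unfolding vecs_def by (intro image_subsetI) simp
qed

lemma card_vecs: "card (vecs n :: (nat \<Rightarrow> 'a::{zero,finite}) set) = CARD('a) ^ n"
  using bij_betw_same_card[OF bij_betw_restrict_vecs] by (simp add: card_PiE)

lemma finite_vecs: "finite (vecs n :: (nat \<Rightarrow> 'a::{zero,finite}) set)"
proof -
  have "finite (PiE {..<n} (\<lambda>_. UNIV :: 'a set))"
    by (simp add: finite_PiE)
  then show ?thesis
    using bij_betw_finite[OF bij_betw_restrict_vecs] by blast
qed

lemma zero_in_vecs [simp]: "0 \<in> vecs n"
  by (simp add: vecs_def)

lemma add_in_vecs: "(x::nat \<Rightarrow> 'a::monoid_add) \<in> vecs n \<Longrightarrow> y \<in> vecs n \<Longrightarrow> x + y \<in> vecs n"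
  by (simp add: vecs_def)

lemma smul_in_vecs: "(x::nat \<Rightarrow> 'a::mult_zero) \<in> vecs n \<Longrightarrow> smul r x \<in> vecs n"
  by (simp add: vecs_def smul_def)

lemma dot_add_left: "dot n (x + y) z = dot n x z + dot n y z"
  by (simp add: dot_def distrib_right sum.distrib)

lemma dot_add_right: "dot n x (y + z) = dot n x y + dot n x z"
  by (simp add: dot_def distrib_left sum.distrib)

lemma dot_commute: "dot n x y = dot n y x"
  by (simp add: dot_def mult.commute)

lemma dot_smul_left: "dot n (smul r x) y = r * dot n x y"
  by (simp add: dot_def smul_def sum_distrib_left mult.assoc)

lemma dot_smul_right: "dot n x (smul r y) = r * dot n x y"
  by (simp add: dot_def smul_def sum_distrib_left mult.left_commute)

lemma dot_diff_right: "dot n x (y - z) = dot n x y - dot n x z"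
  by (simp add: dot_def right_diff_distrib sum_subtractf)

lemma dot_zero_left [simp]: "dot n 0 x = 0"
  and dot_zero_right [simp]: "dot n x 0 = 0"
  by (simp_all add: dot_def)

lemma smul_add_right: "smul r (x + y) = smul r x + smul r (y :: nat \<Rightarrow> 'a::comm_ring_1)"
  by (simp add: smul_def fun_eq_iff distrib_left)

lemma smul_add_left: "smul r x + smul s x = smul (r + s) (x :: nat \<Rightarrow> 'a::comm_ring_1)"
  by (simp add: smul_def fun_eq_iff distrib_right)

lemma smul_smul: "smul r (smul s x) = smul (r * s) (x :: nat \<Rightarrow> 'a::comm_ring_1)"
  by (simp add: smul_def mult.assoc)

lemma smul_zero_left [simp]: "smul 0 x = (0 :: nat \<Rightarrow> 'a::mult_zero)"
  by (simp add: smul_def fun_eq_iff)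

lemma smul_one [simp]: "smul 1 x = (x :: nat \<Rightarrow> 'a::monoid_mult)"
  by (simp add: smul_def)

lemma dual_subset_vecs: "dual n X \<subseteq> vecs n"
  by (auto simp: dual_def)

lemma dual_antimono: "X \<subseteq> Y \<Longrightarrow> dual n Y \<subseteq> dual n X"
  by (auto simp: dual_def)

lemma code_dual: "code n (dual n X)"
  by (auto simp: code_def dual_def add_in_vecs smul_in_vecs dot_add_left dot_smul_left)

lemma subset_dual_dual: "X \<subseteq> vecs n \<Longrightarrow> X \<subseteq> dual n (dual n X)"
  by (auto simp: dual_def dot_commute)

lemma code_diff:
  assumes "code n C" "x \<in> C" "y \<in> C"
  shows "x - y \<in> C"
proof -
  have "x + smul (- 1) y \<in> C"
    using assms by (simp add: code_def)
  moreover have "x + smul (- 1) y = x - y"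
    by (simp add: smul_def fun_eq_iff)
  ultimately show ?thesis
    by simp
qed

lemma finite_code: "code n (C :: (nat \<Rightarrow> 'a::{comm_ring_1,finite}) set) \<Longrightarrow> finite C"
  unfolding code_def using finite_subset finite_vecs by blast

lemma finite_dual: "finite (dual n X :: (nat \<Rightarrow> 'a::{comm_ring_1,finite}) set)"
  using finite_code[OF code_dual] .

lemma code_vecs: "code n (vecs n)"
  by (simp add: code_def add_in_vecs smul_in_vecs)

lemma zero_in_dual: "0 \<in> dual n X"
  using code_dual[of n X] by (simp add: code_def)

lemma dual_zero: "dual n {0} = vecs n"
  by (simp add: dual_def)

lemma card_eq_card_times_card_fibre:
  assumes "finite A" "finite B" "f ` A \<subseteq> B" "\<And>b. b \<in> B \<Longrightarrow> card {a \<in> A. f a = b} = m"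
  shows "card A = card B * m"
proof -
  have "card A = (\<Sum>b\<in>B. card {a \<in> A. f a = b})"
    using sum.group[OF assms(1-3), of "\<lambda>_. 1::nat"] by simp
  also have "\<dots> = card B * m"
    using assms(4) by simp
  finally show ?thesis .
qed

section \<open>The duality formula \<open>|C| |C\<^sup>\<bottom>| = q\<^sup>n\<close>\<close>

definition faithful_character :: "('a::ab_group_add \<Rightarrow> complex) \<Rightarrow> bool" where
  "faithful_character \<psi> \<longleftrightarrow> (\<forall>a b. \<psi> (a + b) = \<psi> a * \<psi> b) \<and> (\<forall>a. \<psi> a = 1 \<longleftrightarrow> a = 0)"

lemma sum_character_eq_0:
  fixes G :: "'b::ab_group_add set" and f :: "'b \<Rightarrow> complex"
  assumes "finite G" and "\<And>x y. x \<in> G \<Longrightarrow> y \<in> G \<Longrightarrow> x + y \<in> G"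
    and hom: "\<And>x y. x \<in> G \<Longrightarrow> y \<in> G \<Longrightarrow> f (x + y) = f x * f y"
    and "g \<in> G" and "f g \<noteq> 1"
  shows "sum f G = 0"
proof -
  have inj: "inj_on (\<lambda>x. x + g) G"
    by (auto simp: inj_on_def)
  have "(\<lambda>x. x + g) ` G \<subseteq> G"
    using assms(2) \<open>g \<in> G\<close> by blast
  then have "(\<lambda>x. x + g) ` G = G"
    using card_subset_eq[OF \<open>finite G\<close>] card_image[OF inj] by simp
  then have "sum f G = (\<Sum>x\<in>G. f (x + g))"
    using sum.reindex[OF inj, of f] by simp
  also have "\<dots> = f g * sum f G"
    using hom \<open>g \<in> G\<close> by (simp add: sum_distrib_left mult.commute)
  finally have "(1 - f g) * sum f G = 0"
    by (simp add: algebra_simps)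
  then show ?thesis
    using \<open>f g \<noteq> 1\<close> by simp
qed

context
  fixes \<psi> :: "'a::{comm_ring_1,finite} \<Rightarrow> complex"
  assumes \<psi>: "faithful_character \<psi>"
begin

lemma character_add: "\<psi> (a + b) = \<psi> a * \<psi> b"
  and character_eq_1_iff: "\<psi> a = 1 \<longleftrightarrow> a = 0"
  using \<psi> by (simp_all add: faithful_character_def)

lemma character_zero: "\<psi> 0 = 1"
  by (simp add: character_eq_1_iff)

lemma sum_character_dot_right:
  assumes X: "X \<subseteq> vecs n" "\<And>x y. x \<in> X \<Longrightarrow> y \<in> X \<Longrightarrow> x + y \<in> X"
    and x: "x \<in> vecs n"
  shows "(\<Sum>c\<in>X. \<psi> (dot n x c)) = (if x \<in> dual n X then of_nat (card X) else 0)"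
proof (cases "x \<in> dual n X")
  case True
  then show ?thesis
    by (simp add: dual_def character_zero)
next
  case False
  then obtain c where "c \<in> X" "dot n x c \<noteq> 0"
    using x by (auto simp: dual_def)
  moreover have "finite X"
    using X(1) finite_subset finite_vecs by blast
  ultimately have "(\<Sum>c\<in>X. \<psi> (dot n x c)) = 0"
    using X(2) by (intro sum_character_eq_0[where g = c]) (simp_all add: dot_add_right character_add character_eq_1_iff)
  with False show ?thesis
    by simp
qed

lemma sum_character_dot_left:
  assumes c: "c \<in> vecs n"
  shows "(\<Sum>x\<in>vecs n. \<psi> (dot n x c)) = (if c = 0 then of_nat (card (vecs n :: (nat \<Rightarrow> 'a) set)) else 0)"
proof (cases "c = 0")
  case True
  then show ?thesis
    by (simp add: character_zero)
next
  case False
  then obtain j where j: "c j \<noteq> 0"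
    by (auto simp: fun_eq_iff)
  with c have "j < n"
    by (metis (mono_tags) vecs_def mem_Collect_eq not_le)
  define e where "e = (\<lambda>i. if i = j then (1::'a) else 0)"
  have "e \<in> vecs n"
    using \<open>j < n\<close> unfolding vecs_def e_def by simp
  moreover have "dot n e c = (\<Sum>i<n. if i = j then c j else 0)"
    unfolding dot_def by (rule sum.cong) (auto simp: e_def)
  then have "dot n e c = c j"
    using \<open>j < n\<close> by simp
  ultimately have "(\<Sum>x\<in>vecs n. \<psi> (dot n x c)) = 0"
    using j by (intro sum_character_eq_0[where g = e])
      (simp_all add: dot_add_left finite_vecs add_in_vecs character_add character_eq_1_iff)
  with False show ?thesis
    by simp
qed

text \<open>Both sides count \<open>\<Sum>\<^sub>x \<Sum>\<^sub>c \<psi>(x \<cdot> c)\<close>, summed first over \<open>c \<in> X\<close> or first over all \<open>x\<close>.\<close>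

lemma card_mult_card_dual:
  fixes X :: "(nat \<Rightarrow> 'a) set"
  assumes X: "X \<subseteq> vecs n" "0 \<in> X" "\<And>x y. x \<in> X \<Longrightarrow> y \<in> X \<Longrightarrow> x + y \<in> X"
  shows "card X * card (dual n X) = CARD('a) ^ n"
proof -
  let ?V = "vecs n :: (nat \<Rightarrow> 'a) set"
  let ?S = "\<Sum>x\<in>?V. \<Sum>c\<in>X. \<psi> (dot n x c)"
  have "finite X"
    using X(1) finite_subset finite_vecs by blast
  have "?S = (\<Sum>x\<in>?V. if x \<in> dual n X then of_nat (card X) else 0)"
    using sum_character_dot_right[OF X(1,3)] by (intro sum.cong) auto
  also have "\<dots> = of_nat (card X) * of_nat (card (?V \<inter> dual n X))"
    by (simp add: sum.If_cases[OF finite_vecs] Collect_mem_eq)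
  also have "?V \<inter> dual n X = dual n X"
    using dual_subset_vecs by blast
  finally have 1: "?S = of_nat (card X * card (dual n X))"
    by simp
  have "?S = (\<Sum>c\<in>X. \<Sum>x\<in>?V. \<psi> (dot n x c))"
    by (rule sum.swap)
  also have "\<dots> = (\<Sum>c\<in>X. if c = 0 then of_nat (card ?V) else 0)"
    using X(1) by (intro sum.cong refl sum_character_dot_left) auto
  also have "\<dots> = of_nat (card ?V)"
    using X(2) \<open>finite X\<close> by (simp add: sum.delta)
  finally have "(of_nat (card X * card (dual n X)) :: complex) = of_nat (card ?V)"
    using 1 by simp
  then show ?thesis
    by (simp only: of_nat_eq_iff card_vecs)
qed

lemma dual_dual:
  fixes C :: "(nat \<Rightarrow> 'a) set"
  assumes "code n C"
  shows "dual n (dual n C) = C"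
proof -
  have C: "C \<subseteq> vecs n" "0 \<in> C" "\<And>x y. x \<in> C \<Longrightarrow> y \<in> C \<Longrightarrow> x + y \<in> C"
    and D: "dual n C \<subseteq> vecs n" "0 \<in> dual n C" "\<And>x y. x \<in> dual n C \<Longrightarrow> y \<in> dual n C \<Longrightarrow> x + y \<in> dual n C"
    using assms code_dual[of n C] by (auto simp: code_def)
  have "card (dual n C) * card (dual n (dual n C)) = card (dual n C) * card C"
    using card_mult_card_dual[OF C] card_mult_card_dual[OF D] by (simp add: mult.commute)
  moreover have "card (dual n C) > 0"
    using D(2) finite_dual card_gt_0_iff by blast
  ultimately have "card (dual n (dual n C)) = card C"
    by simp
  then show ?thesis
    using card_subset_eq[OF finite_dual subset_dual_dual[OF C(1)]] by simp
qed

lemma self_dual_if_card: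
  fixes C :: "(nat \<Rightarrow> 'a) set"
  assumes C: "code n C" "C \<subseteq> dual n C" and card: "CARD('a) ^ n \<le> card C * card C"
  shows "dual n C = C"
proof -
  have "card C * card (dual n C) \<le> card C * card C"
    using C card card_mult_card_dual[of C n] by (simp add: code_def)
  moreover have "card C > 0"
    using C finite_code card_gt_0_iff by (auto simp: code_def)
  ultimately have "card (dual n C) \<le> card C"
    by simp
  then show ?thesis
    using C card_seteq[OF finite_dual] by blast
qed

end

lemma exhaust_2: "(x::2) = 0 \<or> x = 1"
proof (cases x)
  case (of_int z)
  then have "z = 0 \<or> z = 1"
    by auto
  with of_int show ?thesis
    by auto
qed

lemma exhaust_4: "(x::4) = 0 \<or> x = 1 \<or> x = 2 \<or> x = 3"
proof (cases x)
  case (of_int z)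
  then have "z = 0 \<or> z = 1 \<or> z = 2 \<or> z = 3"
    by auto
  with of_int show ?thesis
    by auto
qed

lemma faithful_character_2: "faithful_character (\<lambda>b::2. if b = 0 then 1 else - 1)"
  unfolding faithful_character_def
proof (intro conjI allI)
  fix a b :: 2
  show "(if a + b = 0 then 1 else - 1) = (if a = 0 then 1 else - 1) * (if b = 0 then 1 else (- 1 :: complex))"
    using exhaust_2[of a] exhaust_2[of b] by auto
  show "((if a = 0 then 1 else - 1) = (1 :: complex)) \<longleftrightarrow> a = 0"
    by simp
qed

lemma faithful_character_4:
  "faithful_character (\<lambda>a::4. if a = 0 then 1 else if a = 1 then \<i> else if a = 2 then - 1 else - \<i>)"
  unfolding faithful_character_def
proof (intro conjI allI)
  fix a b :: 4
  show "(if a + b = 0 then 1 else if a + b = 1 then \<i> else if a + b = 2 then - 1 else - \<i>) =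
    (if a = 0 then 1 else if a = 1 then \<i> else if a = 2 then - 1 else - \<i>) *
    (if b = 0 then 1 else if b = 1 then \<i> else if b = 2 then - 1 else - \<i>)"
    using exhaust_4[of a] exhaust_4[of b] by auto
  show "(if a = 0 then 1 else if a = 1 then \<i> else if a = 2 then - 1 else - \<i>) = 1 \<longleftrightarrow> a = 0"
    using exhaust_4[of a] by (auto simp: complex_eq_iff)
qed

lemma code_2_iff:
  "code n (D :: (nat \<Rightarrow> 2) set) \<longleftrightarrow> D \<subseteq> vecs n \<and> 0 \<in> D \<and> (\<forall>x\<in>D. \<forall>y\<in>D. x + y \<in> D)"
proof -
  have "smul r x \<in> D" if "0 \<in> D" "x \<in> D" for r and x :: "nat \<Rightarrow> 2"
    using that exhaust_2[of r] by auto
  then show ?thesis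
    unfolding code_def by blast
qed

lemma card_mult_card_dual_2: "code n (D :: (nat \<Rightarrow> 2) set) \<Longrightarrow> card D * card (dual n D) = 2 ^ n"
  using card_mult_card_dual[OF faithful_character_2, of D n] by (simp add: code_def)

lemma dual_dual_2: "code n (D :: (nat \<Rightarrow> 2) set) \<Longrightarrow> dual n (dual n D) = D"
  by (rule dual_dual[OF faithful_character_2])

lemma exists_dot_eq_1:
  assumes "code n (D :: (nat \<Rightarrow> 2) set)" "v \<in> vecs n" "v \<notin> D"
  shows "\<exists>t\<in>dual n D. dot n t v = 1"
proof -
  have "v \<notin> dual n (dual n D)"
    using assms dual_dual_2 by simp
  then obtain t where "t \<in> dual n D" "dot n v t \<noteq> 0"
    using assms(2) by (auto simp: dual_def)
  then show ?thesis
    using exhaust_2[of "dot n t v"] by (auto simp: dot_commute)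
qed

text \<open>Linearity is not part of the definition: a set equal to its dual is automatically a code.\<close>

definition self_dual_codes :: "nat \<Rightarrow> (nat \<Rightarrow> 'a::comm_ring_1) set set" where
  "self_dual_codes n = {C. dual n C = C}"

lemma code_self_dual: "C \<in> self_dual_codes n \<Longrightarrow> code n C"
  using code_dual[of n C] by (simp add: self_dual_codes_def)

lemma dot_self_dual: "C \<in> self_dual_codes n \<Longrightarrow> x \<in> C \<Longrightarrow> y \<in> C \<Longrightarrow> dot n x y = 0"
  unfolding self_dual_codes_def dual_def by blast

lemma four_power: "(4::nat) ^ n = 2 ^ n * 2 ^ n"
  using power_mult_distrib[of "2::nat" 2 n] by simp

lemma self_dual_subset_eq:
  "C \<in> self_dual_codes n \<Longrightarrow> C' \<in> self_dual_codes n \<Longrightarrow> C' \<subseteq> C \<Longrightarrow> C' = C"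
  unfolding self_dual_codes_def using dual_antimono[of C' C n] by blast

lemma card_self_dual_4:
  assumes "C \<in> self_dual_codes n"
  shows "card (C :: (nat \<Rightarrow> 4) set) = 2 ^ n"
proof -
  have "code n C" "dual n C = C"
    using assms code_self_dual by (simp_all add: self_dual_codes_def)
  then have "card C * card C = 2 ^ n * 2 ^ n"
    using card_mult_card_dual[OF faithful_character_4, of C n] four_power unfolding code_def by simp
  then have "(card C)\<^sup>2 = (2 ^ n)\<^sup>2"
    by (simp only: power2_eq_square)
  then show ?thesis
    by (rule power2_eq_imp_eq) simp_all
qed

lemma self_dual_if_card_4:
  assumes "code n C" "C \<subseteq> dual n C" "2 ^ n \<le> card (C :: (nat \<Rightarrow> 4) set)"
  shows "C \<in> self_dual_codes n"
proof -
  have "CARD(4) ^ n = 2 ^ n * 2 ^ n"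
    using four_power by simp
  also have "\<dots> \<le> card C * card C"
    using assms(3) by (intro mult_le_mono)
  finally show ?thesis
    using self_dual_if_card[OF faithful_character_4 assms(1,2)] by (simp add: self_dual_codes_def)
qed

section \<open>Reduction modulo 2\<close>

definition mod2 :: "4 \<Rightarrow> 2" where
  "mod2 a = (if a = 1 \<or> a = 3 then 1 else 0)"

definition twice :: "2 \<Rightarrow> 4" where
  "twice b = (if b = 0 then 0 else 2)"

definition half :: "4 \<Rightarrow> 2" where
  "half a = (if a = 2 \<or> a = 3 then 1 else 0)"

lemma mod2_zero [simp]: "mod2 0 = 0"
  and mod2_one [simp]: "mod2 1 = 1"
  and twice_zero [simp]: "twice 0 = 0"
  and twice_one: "twice 1 = 2"
  by (simp_all add: mod2_def twice_def)

lemma mod2_add: "mod2 (a + b) = mod2 a + mod2 b"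
  using exhaust_4[of a] exhaust_4[of b] by (auto simp: mod2_def)

lemma mod2_mult: "mod2 (a * b) = mod2 a * mod2 b"
  using exhaust_4[of a] exhaust_4[of b] by (auto simp: mod2_def)

lemma mod2_diff: "mod2 (a - b) = mod2 a + mod2 b"
  using exhaust_4[of a] exhaust_4[of b] by (auto simp: mod2_def)

lemma mod2_twice [simp]: "mod2 (twice b) = 0"
  by (simp add: mod2_def twice_def)

lemma twice_add: "twice (a + b) = twice a + twice b"
  using exhaust_2[of a] exhaust_2[of b] by (auto simp: twice_def)

lemma twice_mult: "twice b * a = twice (b * mod2 a)"
  using exhaust_4[of a] exhaust_2[of b] by (auto simp: mod2_def twice_def)

lemma twice_eq_0_iff [simp]: "twice b = 0 \<longleftrightarrow> b = 0"
  by (simp add: twice_def)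

lemma inj_twice: "inj twice"
  unfolding inj_def using exhaust_2 by (auto simp: twice_def)

lemma twice_half: "mod2 a = 0 \<Longrightarrow> twice (half a) = a"
  using exhaust_4[of a] by (auto simp: mod2_def half_def twice_def)

lemma mod2_eq_0_iff: "mod2 a = 0 \<longleftrightarrow> a = 0 \<or> a = 2"
  using exhaust_4[of a] by (auto simp: mod2_def)

lemma square_4: "a * a = (if mod2 a = 0 then 0 else (1::4))"
  using exhaust_4[of a] by (auto simp: mod2_def)

lemma two_mult_4: "2 * a = twice (mod2 a)"
  using exhaust_4[of a] by (auto simp: mod2_def twice_def)

lemma add_self_2: "(a::2) + a = 0"
  using exhaust_2[of a] by auto

lemma add_self_vec_2: "(x::nat \<Rightarrow> 2) + x = 0"
  by (rule ext) (simp only: plus_fun_def zero_fun_def add_self_2)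

lemma mod2_sum: "mod2 (sum f A) = (\<Sum>a\<in>A. mod2 (f a))"
  by (induction A rule: infinite_finite_induct) (simp_all add: mod2_add)

lemma twice_sum: "twice (sum f A) = (\<Sum>a\<in>A. twice (f a))"
  by (induction A rule: infinite_finite_induct) (simp_all add: twice_add)

definition mod2v :: "(nat \<Rightarrow> 4) \<Rightarrow> (nat \<Rightarrow> 2)" where
  "mod2v x = (\<lambda>i. mod2 (x i))"

definition twicev :: "(nat \<Rightarrow> 2) \<Rightarrow> (nat \<Rightarrow> 4)" where
  "twicev y = (\<lambda>i. twice (y i))"

definition halfv :: "(nat \<Rightarrow> 4) \<Rightarrow> (nat \<Rightarrow> 2)" where
  "halfv x = (\<lambda>i. half (x i))"

lemma mod2v_zero [simp]: "mod2v 0 = 0"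
  and twicev_zero [simp]: "twicev 0 = 0"
  and mod2v_twicev [simp]: "mod2v (twicev y) = 0"
  by (simp_all add: mod2v_def twicev_def fun_eq_iff)

lemma mod2v_add: "mod2v (x + y) = mod2v x + mod2v y"
  by (simp add: mod2v_def fun_eq_iff mod2_add)

lemma mod2v_diff: "mod2v (x - y) = mod2v x + mod2v y"
  by (simp add: mod2v_def fun_eq_iff mod2_diff)

lemma twicev_add: "twicev (x + y) = twicev x + twicev y"
  by (simp add: twicev_def fun_eq_iff twice_add)

lemma twicev_eq_iff: "twicev x = twicev y \<longleftrightarrow> x = y"
  using inj_twice by (auto simp: twicev_def fun_eq_iff inj_eq)

lemma twicev_halfv: "mod2v x = 0 \<Longrightarrow> twicev (halfv x) = x"
  by (simp add: mod2v_def twicev_def halfv_def fun_eq_iff twice_half)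

lemma smul_two: "smul 2 x = twicev (mod2v x)"
  by (simp add: smul_def twicev_def mod2v_def two_mult_4)

lemma mod2v_smul: "mod2v (smul r x) = smul (mod2 r) (mod2v x)"
  by (simp add: smul_def mod2v_def mod2_mult)

lemma smul_twicev: "smul r (twicev y) = twicev (smul (mod2 r) y)"
  by (simp add: smul_def twicev_def fun_eq_iff mult.commute[of r] twice_mult mult.commute[of "mod2 r"])

lemma smul_twice: "smul (twice b) x = twicev (smul b (mod2v x))"
  by (simp add: smul_def twicev_def mod2v_def twice_mult)

lemma mod2v_in_vecs: "x \<in> vecs n \<Longrightarrow> mod2v x \<in> vecs n"
  and twicev_in_vecs: "y \<in> vecs n \<Longrightarrow> twicev y \<in> vecs n"
  and halfv_in_vecs: "x \<in> vecs n \<Longrightarrow> halfv x \<in> vecs n"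
  by (simp_all add: vecs_def mod2v_def twicev_def halfv_def half_def)

lemma mod2_dot: "mod2 (dot n x y) = dot n (mod2v x) (mod2v y)"
  by (simp add: dot_def mod2v_def mod2_sum mod2_mult)

lemma dot_twicev_left: "dot n (twicev y) x = twice (dot n y (mod2v x))"
  by (simp add: dot_def twicev_def mod2v_def twice_sum twice_mult)

lemma dot_twicev_right: "dot n x (twicev y) = twice (dot n y (mod2v x))"
  by (simp add: dot_commute[of n x] dot_twicev_left)

lemma dot_self_4: "dot n x x = of_nat (hamming_wt n (mod2v x))"
proof -
  have "dot n x x = (\<Sum>i\<in>{i \<in> {..<n}. mod2v x i \<noteq> 0}. 1)"
    unfolding dot_def sum.inter_filter[OF finite_lessThan]
    by (rule sum.cong) (simp_all add: square_4 mod2v_def)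
  also have "{i \<in> {..<n}. mod2v x i \<noteq> 0} = {i. i < n \<and> mod2v x i \<noteq> 0}"
    by auto
  finally show ?thesis
    by (simp add: hamming_wt_def)
qed

section \<open>Residue and torsion codes\<close>

definition residue :: "(nat \<Rightarrow> 4) set \<Rightarrow> (nat \<Rightarrow> 2) set" where
  "residue C = mod2v ` C"

definition torsion :: "nat \<Rightarrow> (nat \<Rightarrow> 4) set \<Rightarrow> (nat \<Rightarrow> 2) set" where
  "torsion n C = {y \<in> vecs n. twicev y \<in> C}"

lemma code_residue:
  assumes "code n C"
  shows "code n (residue C)"
  unfolding code_2_iff
proof (intro conjI ballI)
  show "residue C \<subseteq> vecs n"
    using assms mod2v_in_vecs by (auto simp: code_def residue_def)
  show "0 \<in> residue C"
    using assms unfolding code_def residue_def by (metis image_eqI mod2v_zero)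
  show "x + y \<in> residue C" if "x \<in> residue C" "y \<in> residue C" for x y
    using that assms mod2v_add by (auto simp: code_def residue_def image_iff) metis
qed

lemma code_torsion:
  assumes "code n C"
  shows "code n (torsion n C)"
  using assms add_in_vecs by (auto simp: code_2_iff code_def torsion_def twicev_add)

lemma residue_subset_torsion:
  assumes "code n C"
  shows "residue C \<subseteq> torsion n C"
proof
  fix d
  assume "d \<in> residue C"
  then obtain c where c: "c \<in> C" "d = mod2v c"
    by (auto simp: residue_def)
  then have "twicev d \<in> C"
    using assms c(1) unfolding code_def by (metis smul_two)
  moreover have "d \<in> vecs n"
    using assms c mod2v_in_vecs by (auto simp: code_def)
  ultimately show "d \<in> torsion n C"
    by (simp add: torsion_def)
qed

lemma coset_of_torsion:
  assumes "code n C" "c \<in> C"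
  shows "{x \<in> C. mod2v x = mod2v c} = (\<lambda>t. c + twicev t) ` torsion n C"
proof (intro equalityI subsetI)
  fix x
  assume "x \<in> {x \<in> C. mod2v x = mod2v c}"
  then have x: "x \<in> C" "mod2v (x - c) = 0"
    by (simp_all add: mod2v_diff add_self_vec_2)
  then have "x - c \<in> C"
    using assms code_diff by blast
  then have "halfv (x - c) \<in> torsion n C"
    using assms x twicev_halfv halfv_in_vecs by (auto simp: torsion_def code_def)
  moreover have "x = c + twicev (halfv (x - c))"
    using x twicev_halfv by simp
  ultimately show "x \<in> (\<lambda>t. c + twicev t) ` torsion n C"
    by blast
next
  fix x
  assume "x \<in> (\<lambda>t. c + twicev t) ` torsion n C"
  then show "x \<in> {x \<in> C. mod2v x = mod2v c}"
    using assms by (auto simp: torsion_def code_def mod2v_add)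
qed

lemma card_coset_of_torsion:
  assumes "code n C" "c \<in> C"
  shows "card {x \<in> C. mod2v x = mod2v c} = card (torsion n C)"
proof -
  have "inj_on (\<lambda>t. c + twicev t) (torsion n C)"
    by (auto simp: inj_on_def twicev_eq_iff)
  then show ?thesis
    using coset_of_torsion[OF assms] by (simp add: card_image)
qed

lemma card_residue_mult_card_torsion:
  assumes "code n C"
  shows "card C = card (residue C) * card (torsion n C)"
proof (rule card_eq_card_times_card_fibre)
  show "finite C" "finite (residue C)"
    using assms finite_code code_residue by blast+
  show "mod2v ` C \<subseteq> residue C"
    by (simp add: residue_def)
  show "card {c \<in> C. mod2v c = d} = card (torsion n C)" if "d \<in> residue C" for d
    using that card_coset_of_torsion[OF assms] by (auto simp: residue_def)
qed

lemma residue_self_orthogonal: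
  assumes "code n C" "C \<subseteq> dual n C"
  shows "residue C \<subseteq> dual n (residue C)"
proof -
  have "dot n (mod2v x) (mod2v y) = 0" if "x \<in> C" "y \<in> C" for x y
    using assms that mod2_dot[of n x y] by (auto simp: dual_def)
  then show ?thesis
    using assms mod2v_in_vecs by (auto simp: residue_def dual_def code_def)
qed

lemma doubly_even_residue:
  assumes "C \<subseteq> dual n C" "d \<in> residue C"
  shows "4 dvd hamming_wt n d"
proof -
  obtain c where "c \<in> C" "d = mod2v c"
    using assms(2) by (auto simp: residue_def)
  moreover have "dot n c c = 0" if "c \<in> C" for c
    using assms(1) that by (auto simp: dual_def)
  ultimately have "(of_nat (hamming_wt n d) :: 4) = 0"
    using dot_self_4[of n c] by simp
  then show ?thesis
    by (simp add: of_nat_eq_0_iff_char_dvd)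
qed

lemma torsion_self_dual:
  assumes "C \<in> self_dual_codes n"
  shows "torsion n C = dual n (residue C)"
proof -
  have C: "dual n C = C"
    using assms by (simp add: self_dual_codes_def)
  have "twicev y \<in> dual n C \<longleftrightarrow> y \<in> dual n (residue C)" if "y \<in> vecs n" for y
    using that twicev_in_vecs by (auto simp: dual_def residue_def dot_twicev_left)
  then show ?thesis
    using C dual_subset_vecs[of n "residue C"] unfolding torsion_def by blast
qed

lemma exists_residue_dimension:
  assumes "C \<in> self_dual_codes n"
  shows "\<exists>k \<le> n div 2. card (residue C) = 2 ^ k"
proof -
  have C: "code n C"
    using assms by (rule code_self_dual)
  have "card (residue C) * card (torsion n C) = 2 ^ n"
    using card_residue_mult_card_torsion[OF C] card_self_dual_4[OF assms] by simp
  then obtain i j where ij: "card (residue C) = 2 ^ i" "card (torsion n C) = 2 ^ j"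
    using prime_power_mult_nat[OF two_is_prime_nat] by blast
  with \<open>card (residue C) * card (torsion n C) = 2 ^ n\<close> have "i + j = n"
    by (simp add: power_add[symmetric])
  moreover have "card (residue C) \<le> card (torsion n C)"
    using card_mono[OF finite_code[OF code_torsion[OF C]] residue_subset_torsion[OF C]] .
  then have "i \<le> j"
    using ij by simp
  ultimately show ?thesis
    using ij by (intro exI[of _ i]) simp
qed

lemma self_dual_if_residue_torsion:
  assumes C: "code n C" "C \<subseteq> dual n C"
    and D: "code n D" "D \<subseteq> residue C" "dual n D \<subseteq> torsion n C"
  shows "C \<in> self_dual_codes n"
proof (rule self_dual_if_card_4[OF C])
  have "card D \<le> card (residue C)"
    using D(2) finite_code[OF code_residue[OF C(1)]] by (rule card_mono[rotated])
  moreover have "card (dual n D) \<le> card (torsion n C)"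
    using D(3) finite_code[OF code_torsion[OF C(1)]] by (rule card_mono[rotated])
  ultimately have "card D * card (dual n D) \<le> card (residue C) * card (torsion n C)"
    by (rule mult_le_mono)
  then show "2 ^ n \<le> card C"
    using card_mult_card_dual_2[OF D(1)] card_residue_mult_card_torsion[OF C(1)] by simp
qed

section \<open>Doubly-even self-orthogonal binary codes\<close>

definition doubly_even_self_orth :: "nat \<Rightarrow> nat \<Rightarrow> (nat \<Rightarrow> 2) set \<Rightarrow> bool" where
  "doubly_even_self_orth n k D \<longleftrightarrow>
     code n D \<and> D \<subseteq> dual n D \<and> (\<forall>d\<in>D. 4 dvd hamming_wt n d) \<and> card D = 2 ^ k"

lemma nu_eq_card_doubly_even_self_orth: "nu n k = card {D. doubly_even_self_orth n k D}"
proof -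
  have "bin_linear_code n D \<longleftrightarrow> code n D" for D
    unfolding bin_linear_code_def code_2_iff Bvecs_def vecs_def zero_fun_def plus_fun_def ..
  moreover have "bin_self_orthogonal n D \<longleftrightarrow> D \<subseteq> dual n D" if "D \<subseteq> vecs n" for D
    using that by (auto simp: bin_self_orthogonal_def dual_def dot_def)
  ultimately have "bin_nk_code n k D \<and> bin_self_orthogonal n D \<and> doubly_even n D \<longleftrightarrow> doubly_even_self_orth n k D" for D
    by (auto simp: bin_nk_code_def doubly_even_def doubly_even_self_orth_def code_def)
  then show ?thesis
    by (simp add: nu_def)
qed

lemma finite_doubly_even_self_orth: "finite {D. doubly_even_self_orth n k D}"
proof (rule finite_subset)
  show "{D. doubly_even_self_orth n k D} \<subseteq> Pow (vecs n)"
    by (auto simp: doubly_even_self_orth_def code_def)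
qed (simp add: finite_vecs)

text \<open>Translation by \<open>v\<close> swaps the two halves of \<open>D\<close> cut out by the coordinate \<open>j\<close>.\<close>

lemma card_coordinate_hyperplane:
  fixes D :: "(nat \<Rightarrow> 2) set"
  assumes D: "code n D" and v: "v \<in> D" "v j = 1"
  shows "card D = 2 * card {d \<in> D. d j = 0}"
proof -
  let ?H = "{d \<in> D. d j = 0}"
  have closed: "d + v \<in> D" if "d \<in> D" for d
    using D v that unfolding code_2_iff by blast
  have involution: "d + v + v = d" for d
    by (simp only: add.assoc add_self_vec_2 add_0_right)
  have swap: "(d + v) j = 0 \<longleftrightarrow> d j \<noteq> 0" for d
    using v(2) exhaust_2[of "d j"] by (auto simp: plus_fun_def)
  have "bij_betw (\<lambda>d. d + v) ?H (D - ?H)"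
    by (rule bij_betw_byWitness[where f' = "\<lambda>d. d + v"]) (use involution closed swap in auto)
  then have "card (D - ?H) = card ?H"
    by (simp add: bij_betw_same_card)
  moreover have "card (D - ?H) = card D - card ?H" "card ?H \<le> card D"
    using finite_code[OF D] by (auto intro: card_Diff_subset card_mono)
  ultimately show ?thesis
    by simp
qed

lemma exists_hyperplane:
  assumes "doubly_even_self_orth n (Suc k) D"
  obtains D' v where "doubly_even_self_orth n k D'" "D' \<subseteq> D" "v \<in> D" "v \<notin> D'"
    "\<forall>d\<in>D. d \<in> D' \<or> d + v \<in> D'"
proof -
  have D: "code n D" "D \<subseteq> dual n D" "\<forall>d\<in>D. 4 dvd hamming_wt n d" "card D = 2 ^ Suc k"
    using assms by (simp_all add: doubly_even_self_orth_def)
  have "(1::nat) < 2 ^ Suc k"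
    by (rule one_less_power) simp_all
  then have "\<not> D \<subseteq> {0}"
    using card_mono[of "{0}" D] D(4) by auto
  then obtain v where v: "v \<in> D" "v \<noteq> 0"
    by blast
  then obtain j where "v j \<noteq> 0"
    by (auto simp: fun_eq_iff)
  then have j: "v j = 1"
    using exhaust_2[of "v j"] by simp
  define D' where "D' = {d \<in> D. d j = 0}"
  have "code n D'"
    using D(1) by (auto simp: D'_def code_def smul_def)
  moreover have "card D' = 2 ^ k"
    using card_coordinate_hyperplane[OF D(1) v(1) j] D(4) by (simp add: D'_def)
  moreover have "D' \<subseteq> D"
    by (auto simp: D'_def)
  ultimately have "doubly_even_self_orth n k D'"
    using D dual_antimono[of D' D n] by (auto simp: doubly_even_self_orth_def)
  moreover have "d \<in> D' \<or> d + v \<in> D'" if "d \<in> D" for d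
  proof -
    have "d + v \<in> D"
      using D(1) v(1) that unfolding code_2_iff by blast
    then show ?thesis
      using that j exhaust_2[of "d j"] by (auto simp: D'_def)
  qed
  ultimately show ?thesis
    using that \<open>D' \<subseteq> D\<close> v j by (auto simp: D'_def)
qed

section \<open>Counting self-dual \<open>\<int>\<^sub>4\<close>-codes with a given residue code\<close>

definition self_dual_over :: "nat \<Rightarrow> (nat \<Rightarrow> 2) set \<Rightarrow> (nat \<Rightarrow> 4) set set" where
  "self_dual_over n D = {C \<in> self_dual_codes n. residue C = D}"

text \<open>The two halves of the induction step: for a hyperplane \<open>D'\<close> of the residue code,
  \<open>shrink\<close> passes from residue \<open>D\<close> down to residue \<open>D'\<close>, and \<open>adjoin\<close> passes back up by
  adding a lift \<open>w\<close> of a vector of \<open>D - D'\<close>.\<close>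

definition shrink :: "nat \<Rightarrow> (nat \<Rightarrow> 2) set \<Rightarrow> (nat \<Rightarrow> 4) set \<Rightarrow> (nat \<Rightarrow> 4) set" where
  "shrink n D' C = {c + twicev t | c t. c \<in> C \<and> mod2v c \<in> D' \<and> t \<in> dual n D'}"

definition adjoin :: "nat \<Rightarrow> (nat \<Rightarrow> 4) set \<Rightarrow> (nat \<Rightarrow> 4) \<Rightarrow> (nat \<Rightarrow> 4) set" where
  "adjoin n C w = {c + smul j w | c j. c \<in> C \<and> dot n c w = 0}"

lemma self_dual_overD:
  assumes "C \<in> self_dual_over n D"
  shows "code n C" "dual n C = C" "residue C = D" "torsion n C = dual n D" "card C = 2 ^ n"
  using assms code_self_dual torsion_self_dual card_self_dual_4
  by (auto simp: self_dual_over_def self_dual_codes_def)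

lemma finite_self_dual_over: "finite (self_dual_over n D)"
proof (rule finite_subset)
  show "self_dual_over n D \<subseteq> Pow (vecs n)"
    using self_dual_overD(1) unfolding code_def by blast
qed (simp add: finite_vecs)

lemma code_twicev_image:
  assumes "code n D"
  shows "code n (twicev ` D)"
  unfolding code_def
proof (intro conjI ballI allI)
  show "twicev ` D \<subseteq> vecs n"
    using assms twicev_in_vecs unfolding code_def by blast
  have "twicev 0 \<in> twicev ` D"
    using assms unfolding code_def by blast
  then show "0 \<in> twicev ` D"
    by simp
next
  fix x y
  assume "x \<in> twicev ` D" "y \<in> twicev ` D"
  then obtain a b where ab: "a \<in> D" "b \<in> D" "x = twicev a" "y = twicev b"
    by blast
  then have "twicev (a + b) \<in> twicev ` D"
    using assms unfolding code_def by blast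
  then show "x + y \<in> twicev ` D"
    by (simp add: ab twicev_add)
next
  fix r x
  assume "x \<in> twicev ` D"
  then obtain a where a: "a \<in> D" "x = twicev a"
    by blast
  then have "twicev (smul (mod2 r) a) \<in> twicev ` D"
    using assms unfolding code_def by blast
  then show "smul r x \<in> twicev ` D"
    by (simp add: a smul_twicev)
qed

lemma self_dual_over_zero: "self_dual_over n {0} = {twicev ` vecs n}"
proof -
  let ?C = "twicev ` vecs n"
  have residue: "residue ?C = {0}"
    unfolding residue_def image_image mod2v_twicev using zero_in_vecs by blast
  have "?C \<subseteq> dual n ?C"
    unfolding dual_def using twicev_in_vecs by (auto simp: dot_twicev_left)
  moreover have "dual n {0} \<subseteq> torsion n ?C"
    unfolding dual_zero torsion_def by blast
  moreover have "code n {0 :: nat \<Rightarrow> 2}"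
    by (simp add: code_2_iff)
  ultimately have self_dual: "?C \<in> self_dual_over n {0}"
    using self_dual_if_residue_torsion[OF code_twicev_image[OF code_vecs]] residue
    by (simp add: self_dual_over_def)
  have "?C = C" if C: "C \<in> self_dual_over n {0}" for C
  proof (rule self_dual_subset_eq)
    show "C \<in> self_dual_codes n" "?C \<in> self_dual_codes n"
      using C self_dual by (simp_all add: self_dual_over_def)
    show "?C \<subseteq> C"
      using self_dual_overD(4)[OF C] unfolding dual_zero torsion_def by blast
  qed
  then show ?thesis
    using self_dual by blast
qed

lemma shrink_memI: "c \<in> C \<Longrightarrow> mod2v c \<in> D' \<Longrightarrow> c \<in> shrink n D' C"
  unfolding shrink_def using code_dual[of n D'] by (force simp: code_def)

lemma code_shrink:
  assumes C: "code n C" and D': "code n D'"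
  shows "code n (shrink n D' C)"
  unfolding code_def
proof (intro conjI ballI allI)
  show "shrink n D' C \<subseteq> vecs n"
    using C dual_subset_vecs by (auto simp: shrink_def code_def intro!: add_in_vecs twicev_in_vecs)
  show "0 \<in> shrink n D' C"
    using C D' by (intro shrink_memI) (auto simp: code_def)
next
  fix x y
  assume "x \<in> shrink n D' C" "y \<in> shrink n D' C"
  then obtain c1 t1 c2 t2 where 1: "x = c1 + twicev t1" "c1 \<in> C" "mod2v c1 \<in> D'" "t1 \<in> dual n D'"
    and 2: "y = c2 + twicev t2" "c2 \<in> C" "mod2v c2 \<in> D'" "t2 \<in> dual n D'"
    by (auto simp: shrink_def)
  then have "x + y = (c1 + c2) + twicev (t1 + t2)"
    by (simp add: twicev_add add_ac)
  moreover have "c1 + c2 \<in> C" "mod2v (c1 + c2) \<in> D'" "t1 + t2 \<in> dual n D'"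
    using C D' code_dual[of n D'] 1 2 unfolding code_def by (simp_all add: mod2v_add)
  ultimately show "x + y \<in> shrink n D' C"
    unfolding shrink_def by blast
next
  fix r x
  assume "x \<in> shrink n D' C"
  then obtain c t where 1: "x = c + twicev t" "c \<in> C" "mod2v c \<in> D'" "t \<in> dual n D'"
    by (auto simp: shrink_def)
  then have "smul r x = smul r c + twicev (smul (mod2 r) t)"
    by (simp add: smul_add_right smul_twicev)
  moreover have "smul r c \<in> C" "mod2v (smul r c) \<in> D'" "smul (mod2 r) t \<in> dual n D'"
    using C D' code_dual[of n D'] 1 unfolding code_def by (simp_all add: mod2v_smul)
  ultimately show "smul r x \<in> shrink n D' C"
    unfolding shrink_def by blast
qed

lemma shrink_self_orthogonal:
  assumes C: "code n C" "C \<subseteq> dual n C" and D': "code n D'"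
  shows "shrink n D' C \<subseteq> dual n (shrink n D' C)"
proof
  fix x
  assume x: "x \<in> shrink n D' C"
  then obtain c1 t1 where 1: "x = c1 + twicev t1" "c1 \<in> C" "mod2v c1 \<in> D'" "t1 \<in> dual n D'"
    by (auto simp: shrink_def)
  have "dot n x y = 0" if "y \<in> shrink n D' C" for y
  proof -
    obtain c2 t2 where 2: "y = c2 + twicev t2" "c2 \<in> C" "mod2v c2 \<in> D'" "t2 \<in> dual n D'"
      using \<open>y \<in> shrink n D' C\<close> by (auto simp: shrink_def)
    have "dot n c1 c2 = 0" "dot n t1 (mod2v c2) = 0" "dot n t2 (mod2v c1) = 0"
      using C(2) 1 2 unfolding dual_def by blast+
    then show ?thesis
      using 1 2 by (simp add: dot_add_left dot_add_right dot_twicev_left dot_twicev_right mod2v_add)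
  qed
  moreover have "x \<in> vecs n"
    using x code_shrink[OF C(1) D'] unfolding code_def by blast
  ultimately show "x \<in> dual n (shrink n D' C)"
    unfolding dual_def by blast
qed

lemma residue_shrink:
  assumes "D' \<subseteq> residue C"
  shows "residue (shrink n D' C) = D'"
proof
  show "residue (shrink n D' C) \<subseteq> D'"
    by (auto simp: residue_def shrink_def mod2v_add)
  show "D' \<subseteq> residue (shrink n D' C)"
  proof
    fix d
    assume "d \<in> D'"
    then obtain c where "c \<in> C" "d = mod2v c"
      using assms by (auto simp: residue_def)
    with \<open>d \<in> D'\<close> show "d \<in> residue (shrink n D' C)"
      unfolding residue_def by (blast intro: shrink_memI)
  qed
qed

lemma dual_subset_torsion_shrink:
  assumes "0 \<in> C" "0 \<in> D'"
  shows "dual n D' \<subseteq> torsion n (shrink n D' C)"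
proof
  fix t
  assume t: "t \<in> dual n D'"
  then have "twicev t \<in> shrink n D' C"
    using assms unfolding shrink_def by (intro CollectI exI[of _ 0] exI[of _ t]) simp
  then show "t \<in> torsion n (shrink n D' C)"
    using t dual_subset_vecs by (auto simp: torsion_def)
qed

lemma shrink_self_dual_over:
  assumes C: "C \<in> self_dual_over n D" and D': "code n D'" "D' \<subseteq> D"
  shows "shrink n D' C \<in> self_dual_over n D'"
proof -
  note C' = self_dual_overD[OF C]
  have "code n (shrink n D' C)" "shrink n D' C \<subseteq> dual n (shrink n D' C)"
    using C' D' code_shrink shrink_self_orthogonal by auto
  moreover have "residue (shrink n D' C) = D'"
    using C' D' by (intro residue_shrink) auto
  moreover have "dual n D' \<subseteq> torsion n (shrink n D' C)"
    using C' D' by (intro dual_subset_torsion_shrink) (auto simp: code_def)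
  ultimately show ?thesis
    using self_dual_if_residue_torsion D' by (auto simp: self_dual_over_def)
qed

lemma adjoin_memI: "c \<in> C \<Longrightarrow> dot n c w = 0 \<Longrightarrow> c + smul j w \<in> adjoin n C w"
  unfolding adjoin_def by blast

lemma code_adjoin:
  assumes C: "code n C" and w: "w \<in> vecs n"
  shows "code n (adjoin n C w)"
  unfolding code_def
proof (intro conjI ballI allI)
  show "adjoin n C w \<subseteq> vecs n"
    using C w by (auto simp: adjoin_def code_def intro!: add_in_vecs smul_in_vecs)
  show "0 \<in> adjoin n C w"
    using C adjoin_memI[of 0 C n w 0] by (simp add: code_def)
next
  fix x y
  assume "x \<in> adjoin n C w" "y \<in> adjoin n C w"
  then obtain c1 j1 c2 j2 where 1: "x = c1 + smul j1 w" "c1 \<in> C" "dot n c1 w = 0"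
    and 2: "y = c2 + smul j2 w" "c2 \<in> C" "dot n c2 w = 0"
    by (auto simp: adjoin_def)
  then have "x + y = (c1 + c2) + smul (j1 + j2) w"
    by (simp add: smul_add_left[symmetric] add_ac)
  moreover have "c1 + c2 \<in> C" "dot n (c1 + c2) w = 0"
    using C 1 2 unfolding code_def by (simp_all add: dot_add_left)
  ultimately show "x + y \<in> adjoin n C w"
    by (simp add: adjoin_memI)
next
  fix r x
  assume "x \<in> adjoin n C w"
  then obtain c j where 1: "x = c + smul j w" "c \<in> C" "dot n c w = 0"
    by (auto simp: adjoin_def)
  then have "smul r x = smul r c + smul (r * j) w"
    by (simp add: smul_add_right smul_smul)
  moreover have "smul r c \<in> C" "dot n (smul r c) w = 0"
    using C 1 unfolding code_def by (simp_all add: dot_smul_left)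
  ultimately show "smul r x \<in> adjoin n C w"
    by (simp add: adjoin_memI)
qed

lemma adjoin_self_orthogonal:
  assumes C: "code n C" "C \<subseteq> dual n C" and w: "w \<in> vecs n" "dot n w w = 0"
  shows "adjoin n C w \<subseteq> dual n (adjoin n C w)"
proof
  fix x
  assume x: "x \<in> adjoin n C w"
  then obtain c1 j1 where 1: "x = c1 + smul j1 w" "c1 \<in> C" "dot n c1 w = 0"
    by (auto simp: adjoin_def)
  have "dot n x y = 0" if "y \<in> adjoin n C w" for y
  proof -
    obtain c2 j2 where 2: "y = c2 + smul j2 w" "c2 \<in> C" "dot n c2 w = 0"
      using \<open>y \<in> adjoin n C w\<close> by (auto simp: adjoin_def)
    have "dot n c1 c2 = 0" "dot n w c2 = 0"
      using C(2) 1 2 dot_commute[of n w c2] unfolding dual_def by auto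
    then show ?thesis
      using 1 2 w by (simp add: dot_add_left dot_add_right dot_smul_left dot_smul_right)
  qed
  moreover have "x \<in> vecs n"
    using x code_adjoin[OF C(1) w(1)] unfolding code_def by blast
  ultimately show "x \<in> dual n (adjoin n C w)"
    unfolding dual_def by blast
qed

lemma card_lifts:
  assumes "v \<in> vecs n"
  shows "card {w \<in> vecs n. mod2v w = v} = 2 ^ n"
proof -
  define u where "u = (\<lambda>i. if v i = 0 then 0 else (1::4))"
  have u: "u \<in> vecs n" "mod2v u = v"
    using assms exhaust_2 by (auto simp: u_def vecs_def mod2v_def mod2_def fun_eq_iff)
  have "torsion n (vecs n) = vecs n"
    using twicev_in_vecs by (auto simp: torsion_def)
  then show ?thesis
    using card_coset_of_torsion[OF code_vecs u(1)] u card_vecs[where 'a = 2] by simp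
qed

locale residue_hyperplane =
  fixes n k :: nat and D D' :: "(nat \<Rightarrow> 2) set" and v :: "nat \<Rightarrow> 2"
  assumes doubly_even_self_orth_D: "doubly_even_self_orth n (Suc k) D"
    and doubly_even_self_orth_D': "doubly_even_self_orth n k D'"
    and subset: "D' \<subseteq> D" and v: "v \<in> D" "v \<notin> D'"
    and cover: "\<forall>d\<in>D. d \<in> D' \<or> d + v \<in> D'"
begin

lemma code_D: "code n D"
  and code_D': "code n D'"
  and self_orthogonal_D: "D \<subseteq> dual n D"
  and doubly_even_D: "\<forall>d\<in>D. 4 dvd hamming_wt n d"
  and card_D: "card D = 2 ^ Suc k"
  using doubly_even_self_orth_D doubly_even_self_orth_D' by (simp_all add: doubly_even_self_orth_def)

lemma v_in_vecs: "v \<in> vecs n"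
  using code_D v(1) by (auto simp: code_def)

lemma v_in_dual_D': "v \<in> dual n D'"
  using self_orthogonal_D v(1) dual_antimono[OF subset] by blast

lemma orthogonal_lift:
  assumes C: "C \<in> self_dual_over n D'" and w: "mod2v w = v" and d: "d \<in> D'"
  shows "\<exists>c\<in>C. dot n c w = 0 \<and> mod2v c = d"
proof -
  note C' = self_dual_overD[OF C]
  obtain c where c: "c \<in> C" "mod2v c = d"
    using d C'(3) by (auto simp: residue_def)
  have "mod2 (dot n c w) = dot n d v"
    using c w by (simp add: mod2_dot)
  also have "\<dots> = 0"
    using self_orthogonal_D subset d v(1) by (auto simp: dual_def)
  finally consider "dot n c w = 0" | "dot n c w = 2"
    using mod2_eq_0_iff by blast
  then show ?thesis
  proof cases
    case 1
    then show ?thesis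
      using c by blast
  next
    case 2
    obtain t where t: "t \<in> dual n D'" "dot n t v = 1"
      using exists_dot_eq_1[OF code_D' v_in_vecs v(2)] by blast
    then have "c + twicev t \<in> C"
      using C'(1,4) c(1) by (auto simp: torsion_def code_def)
    moreover have "dot n (c + twicev t) w = 0"
      using 2 t w by (simp add: dot_add_left dot_twicev_left twice_one)
    moreover have "mod2v (c + twicev t) = d"
      using c by (simp add: mod2v_add)
    ultimately show ?thesis
      by blast
  qed
qed

lemma residue_adjoin:
  assumes C: "C \<in> self_dual_over n D'" and w: "mod2v w = v"
  shows "residue (adjoin n C w) = D"
proof
  note C' = self_dual_overD[OF C]
  show "residue (adjoin n C w) \<subseteq> D"
  proof
    fix d
    assume "d \<in> residue (adjoin n C w)"
    then obtain c j where "c \<in> C" "d = mod2v (c + smul j w)"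
      by (auto simp: residue_def adjoin_def)
    moreover have "mod2v c \<in> D"
      using \<open>c \<in> C\<close> C'(3) subset by (auto simp: residue_def)
    ultimately show "d \<in> D"
      using code_D v(1) w by (simp add: code_def mod2v_add mod2v_smul)
  qed
  show "D \<subseteq> residue (adjoin n C w)"
  proof
    fix d
    assume d: "d \<in> D"
    have adjoined: "mod2v c + smul (mod2 j) v \<in> residue (adjoin n C w)"
      if "c \<in> C" "dot n c w = 0" for c j
      using imageI[OF adjoin_memI[OF that], of mod2v j] w
      by (simp add: residue_def mod2v_add mod2v_smul)
    from cover d consider "d \<in> D'" | "d + v \<in> D'"
      by blast
    then show "d \<in> residue (adjoin n C w)"
    proof cases
      case 1
      then obtain c where "c \<in> C" "dot n c w = 0" "mod2v c = d"
        using orthogonal_lift[OF C w] by blast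
      then show ?thesis
        using adjoined[of c 0] by simp
    next
      case 2
      then obtain c where "c \<in> C" "dot n c w = 0" "mod2v c = d + v"
        using orthogonal_lift[OF C w] by blast
      moreover have "d + v + smul (mod2 1) v = d"
        by (simp only: mod2_one smul_one add.assoc add_self_vec_2 add_0_right)
      ultimately show ?thesis
        using adjoined[of c 1] by simp
    qed
  qed
qed

lemma dual_subset_torsion_adjoin:
  assumes C: "C \<in> self_dual_over n D'" and w: "mod2v w = v"
  shows "dual n D \<subseteq> torsion n (adjoin n C w)"
proof
  fix t
  assume t: "t \<in> dual n D"
  then have "twicev t \<in> C"
    using self_dual_overD(4)[OF C] dual_antimono[OF subset] by (auto simp: torsion_def)
  moreover have "dot n (twicev t) w = 0"
    using t v(1) w by (simp add: dot_twicev_left dual_def)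
  ultimately have "twicev t + smul 0 w \<in> adjoin n C w"
    by (rule adjoin_memI)
  then show "t \<in> torsion n (adjoin n C w)"
    using t dual_subset_vecs by (auto simp: torsion_def)
qed

lemma adjoin_self_dual_over:
  assumes C: "C \<in> self_dual_over n D'" and w: "w \<in> vecs n" "mod2v w = v"
  shows "adjoin n C w \<in> self_dual_over n D"
proof -
  note C' = self_dual_overD[OF C]
  have "dot n w w = 0"
    using doubly_even_D v(1) w(2) by (simp add: dot_self_4 of_nat_eq_0_iff_char_dvd)
  then have "code n (adjoin n C w)" "adjoin n C w \<subseteq> dual n (adjoin n C w)"
    using code_adjoin[OF C'(1) w(1)] adjoin_self_orthogonal[OF C'(1) _ w(1)] C'(2) by simp_all
  then have "adjoin n C w \<in> self_dual_codes n"
    using self_dual_if_residue_torsion[OF _ _ code_D] residue_adjoin[OF C w(2)]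
      dual_subset_torsion_adjoin[OF C w(2)] by simp
  then show ?thesis
    using residue_adjoin[OF C w(2)] by (simp add: self_dual_over_def)
qed

lemma shrink_adjoin_subset:
  assumes C: "C \<in> self_dual_over n D'" and w: "mod2v w = v"
  shows "shrink n D' (adjoin n C w) \<subseteq> C"
proof
  note C' = self_dual_overD[OF C]
  fix y
  assume "y \<in> shrink n D' (adjoin n C w)"
  then obtain c j t where y: "y = c + smul j w + twicev t" "c \<in> C"
    "mod2v (c + smul j w) \<in> D'" "t \<in> dual n D'"
    by (auto simp: shrink_def adjoin_def)
  have c: "mod2v c \<in> D'"
    using y(2) C'(3) by (auto simp: residue_def)
  have "mod2 j = 0"
  proof (rule ccontr)
    assume "mod2 j \<noteq> 0"
    then have "mod2v (c + smul j w) + mod2v c = v"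
      using w exhaust_2[of "mod2 j"]
      by (simp add: mod2v_add mod2v_smul add.commute add.left_commute add_self_vec_2)
    then show False
      using y(3) c code_D' v(2) by (metis code_2_iff)
  qed
  then have "smul j w = twicev (smul (half j) v)"
    using twice_half smul_twice w by metis
  moreover have "smul (half j) v \<in> dual n D'"
    using v_in_dual_D' code_dual[of n D'] by (simp add: code_def)
  moreover have "twicev u \<in> C" if "u \<in> dual n D'" for u
    using that C'(4) unfolding torsion_def by blast
  ultimately show "y \<in> C"
    using y C'(1) unfolding code_def by (metis add.assoc)
qed

lemma shrink_adjoin:
  assumes C: "C \<in> self_dual_over n D'" and w: "w \<in> vecs n" "mod2v w = v"
  shows "shrink n D' (adjoin n C w) = C"
proof (rule self_dual_subset_eq)
  show "C \<in> self_dual_codes n" "shrink n D' (adjoin n C w) \<in> self_dual_codes n"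
    using C shrink_self_dual_over[OF adjoin_self_dual_over[OF C w] code_D' subset]
    by (simp_all add: self_dual_over_def)
qed (rule shrink_adjoin_subset[OF C w(2)])

text \<open>An element of \<open>shrink n D' C\<close> orthogonal to \<open>w\<close> is orthogonal to all of \<open>C\<close>, since \<open>C\<close> is
  spanned by \<open>shrink n D' C\<close> and \<open>w\<close>.\<close>

lemma adjoin_shrink_subset:
  assumes C: "C \<in> self_dual_over n D" and w: "w \<in> C" "mod2v w = v"
  shows "adjoin n (shrink n D' C) w \<subseteq> C"
proof
  note C' = self_dual_overD[OF C]
  have S: "shrink n D' C \<in> self_dual_over n D'"
    using shrink_self_dual_over[OF C code_D' subset] .
  then have S_self_dual: "shrink n D' C \<in> self_dual_codes n"
    by (simp add: self_dual_over_def)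
  fix x
  assume "x \<in> adjoin n (shrink n D' C) w"
  then obtain y j where y: "x = y + smul j w" "y \<in> shrink n D' C" "dot n y w = 0"
    by (auto simp: adjoin_def)
  have "dot n y c = 0" if c: "c \<in> C" for c
  proof -
    have "mod2v c \<in> D"
      using c C'(3) by (auto simp: residue_def)
    then consider "mod2v c \<in> D'" | "mod2v (c - w) \<in> D'"
      using cover w(2) by (auto simp: mod2v_diff)
    then show ?thesis
    proof cases
      case 1
      show ?thesis
        using dot_self_dual[OF S_self_dual y(2) shrink_memI[OF c 1]] .
    next
      case 2
      have "dot n y (c - w) = 0"
        using dot_self_dual[OF S_self_dual y(2) shrink_memI[OF code_diff[OF C'(1) c w(1)] 2]] .
      then show ?thesis
        using y(3) by (simp add: dot_diff_right)
    qed
  qed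
  moreover have "y \<in> vecs n"
    using y(2) self_dual_overD(1)[OF S] unfolding code_def by blast
  ultimately have "y \<in> dual n C"
    unfolding dual_def by blast
  then show "x \<in> C"
    using y(1) w(1) C'(1,2) unfolding code_def by simp
qed

lemma adjoin_shrink:
  assumes C: "C \<in> self_dual_over n D" and w: "w \<in> C" "mod2v w = v"
  shows "adjoin n (shrink n D' C) w = C"
proof (rule self_dual_subset_eq)
  have "w \<in> vecs n"
    using w(1) self_dual_overD(1)[OF C] unfolding code_def by blast
  then show "C \<in> self_dual_codes n" "adjoin n (shrink n D' C) w \<in> self_dual_codes n"
    using C adjoin_self_dual_over[OF shrink_self_dual_over[OF C code_D' subset] _ w(2)]
    by (simp_all add: self_dual_over_def)
qed (rule adjoin_shrink_subset[OF C w])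

lemma adjoin_fibre:
  assumes C: "C \<in> self_dual_over n D"
  shows "{p \<in> self_dual_over n D' \<times> {w \<in> vecs n. mod2v w = v}. adjoin n (fst p) (snd p) = C}
    = (\<lambda>w. (shrink n D' C, w)) ` {c \<in> C. mod2v c = v}"
proof (intro equalityI subsetI)
  fix p
  assume "p \<in> {p \<in> self_dual_over n D' \<times> {w \<in> vecs n. mod2v w = v}. adjoin n (fst p) (snd p) = C}"
  then obtain C0 w where p: "p = (C0, w)" "C0 \<in> self_dual_over n D'" "w \<in> vecs n" "mod2v w = v"
    and C_eq: "C = adjoin n C0 w"
    by auto
  have "w \<in> C"
    using adjoin_memI[of 0 C0 n w 1] self_dual_overD(1)[OF p(2)] C_eq by (simp add: code_def)
  moreover have "C0 = shrink n D' C"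
    using shrink_adjoin[OF p(2-4)] C_eq by simp
  ultimately show "p \<in> (\<lambda>w. (shrink n D' C, w)) ` {c \<in> C. mod2v c = v}"
    using p by blast
next
  fix p
  assume "p \<in> (\<lambda>w. (shrink n D' C, w)) ` {c \<in> C. mod2v c = v}"
  then obtain w where p: "p = (shrink n D' C, w)" and w: "w \<in> C" "mod2v w = v"
    by blast
  have "w \<in> vecs n"
    using w(1) self_dual_overD(1)[OF C] unfolding code_def by blast
  then show "p \<in> {p \<in> self_dual_over n D' \<times> {w \<in> vecs n. mod2v w = v}. adjoin n (fst p) (snd p) = C}"
    using p w shrink_self_dual_over[OF C code_D' subset] adjoin_shrink[OF C w] by simp
qed

lemma card_self_dual_over_step:
  "card (self_dual_over n D') * 2 ^ n = card (self_dual_over n D) * card (dual n D)"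
proof -
  let ?P = "self_dual_over n D' \<times> {w \<in> vecs n. mod2v w = v}"
  have "card ?P = card (self_dual_over n D) * card (dual n D)"
  proof (rule card_eq_card_times_card_fibre)
    show "finite ?P"
      by (intro finite_cartesian_product finite_self_dual_over) (simp add: finite_vecs)
    show "finite (self_dual_over n D)"
      by (rule finite_self_dual_over)
    show "(\<lambda>p. adjoin n (fst p) (snd p)) ` ?P \<subseteq> self_dual_over n D"
      using adjoin_self_dual_over by auto
    fix C
    assume C: "C \<in> self_dual_over n D"
    note C' = self_dual_overD[OF C]
    obtain c where c: "c \<in> C" "mod2v c = v"
      using v(1) C'(3) by (auto simp: residue_def)
    have "card {x \<in> C. mod2v x = v} = card (dual n D)"
      using card_coset_of_torsion[OF C'(1) c(1)] c(2) C'(4) by simp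
    moreover have "inj_on (\<lambda>w. (shrink n D' C, w)) {x \<in> C. mod2v x = v}"
      by (simp add: inj_on_def)
    ultimately show "card {p \<in> ?P. adjoin n (fst p) (snd p) = C} = card (dual n D)"
      unfolding adjoin_fibre[OF C] by (simp only: card_image)
  qed
  then show ?thesis
    using card_lifts[OF v_in_vecs] by (simp add: card_cartesian_product)
qed

end

lemma card_self_dual_over:
  "doubly_even_self_orth n k D \<Longrightarrow> card (self_dual_over n D) = 2 ^ (k * (k + 1) div 2)"
proof (induction k arbitrary: D)
  case 0
  then have "card D = 1" "0 \<in> D"
    by (simp_all add: doubly_even_self_orth_def code_def)
  then have "D = {0}"
    by (metis card_1_singletonE singletonD)
  then show ?case
    by (simp add: self_dual_over_zero)
next
  case (Suc k)
  obtain D' v where "doubly_even_self_orth n k D'" "D' \<subseteq> D" "v \<in> D" "v \<notin> D'" "\<forall>d\<in>D. d \<in> D' \<or> d + v \<in> D'"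
    using exists_hyperplane[OF Suc.prems] by blast
  then interpret residue_hyperplane n k D D' v
    using Suc.prems by unfold_locales
  have "card (self_dual_over n D) * card (dual n D)
      = 2 ^ (k * (k + 1) div 2) * 2 ^ Suc k * card (dual n D)"
    using card_self_dual_over_step Suc.IH[OF doubly_even_self_orth_D'] card_mult_card_dual_2[OF code_D] card_D
    by (simp add: mult.assoc)
  moreover have "card (dual n D) > 0"
    using code_dual[of n D] finite_dual card_gt_0_iff by (auto simp: code_def)
  ultimately have "card (self_dual_over n D) = 2 ^ (k * (k + 1) div 2 + Suc k)"
    by (simp add: power_add)
  also have "k * (k + 1) div 2 + Suc k = Suc k * (Suc k + 1) div 2"
    by simp
  finally show ?case .
qed

lemma card_self_dual_codes_4:
  "card (self_dual_codes n :: (nat \<Rightarrow> 4) set set) = (\<Sum>k = 0..n div 2. nu n k * 2 ^ (k * (k + 1) div 2))"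
proof -
  let ?\<D> = "\<lambda>k. {D. doubly_even_self_orth n k D}"
  let ?U = "\<Union>k\<in>{0..n div 2}. ?\<D> k"
  have residues: "residue ` self_dual_codes n \<subseteq> ?U"
  proof
    fix D
    assume "D \<in> residue ` self_dual_codes n"
    then obtain C where C: "C \<in> self_dual_codes n" and D: "D = residue C"
      by blast
    then obtain k where "k \<le> n div 2" "card D = 2 ^ k"
      using exists_residue_dimension by blast
    moreover have "code n C" "C \<subseteq> dual n C"
      using C code_self_dual by (simp_all add: self_dual_codes_def)
    ultimately have "doubly_even_self_orth n k D"
      unfolding doubly_even_self_orth_def D
      using code_residue residue_self_orthogonal doubly_even_residue by blast
    with \<open>k \<le> n div 2\<close> show "D \<in> ?U"
      by auto
  qed
  have "self_dual_codes n \<subseteq> Pow (vecs n :: (nat \<Rightarrow> 4) set)"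
    using code_self_dual unfolding code_def by blast
  then have "finite (self_dual_codes n :: (nat \<Rightarrow> 4) set set)"
    by (rule finite_subset) (simp add: finite_vecs)
  moreover have "finite ?U"
    by (simp add: finite_doubly_even_self_orth)
  ultimately have "card (self_dual_codes n :: (nat \<Rightarrow> 4) set set)
      = (\<Sum>D\<in>?U. card (self_dual_over n D))"
    using sum.group[OF _ _ residues, of "\<lambda>_. 1::nat"] by (simp add: self_dual_over_def)
  also have "\<dots> = (\<Sum>k = 0..n div 2. \<Sum>D\<in>?\<D> k. card (self_dual_over n D))"
  proof (rule sum.UNION_disjoint)
    show "\<forall>i\<in>{0..n div 2}. \<forall>j\<in>{0..n div 2}. i \<noteq> j \<longrightarrow> ?\<D> i \<inter> ?\<D> j = {}"
      by (auto simp: doubly_even_self_orth_def)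
  qed (simp_all add: finite_doubly_even_self_orth)
  also have "\<dots> = (\<Sum>k = 0..n div 2. nu n k * 2 ^ (k * (k + 1) div 2))"
    by (simp add: card_self_dual_over nu_eq_card_doubly_even_self_orth)
  finally show ?thesis .
qed

section \<open>Codes over \<open>R = \<int>\<^sub>4[v]/(v\<^sup>2 - v)\<close>\<close>

text \<open>\<open>fst\<close> and \<open>eval1\<close> evaluate \<open>a + b v\<close> at \<open>v = 0\<close> and \<open>v = 1\<close>; \<open>glue\<close> inverts the resulting
  isomorphism \<open>R \<cong> \<int>\<^sub>4 \<times> \<int>\<^sub>4\<close>.\<close>

definition eval1 :: "ring_R \<Rightarrow> 4" where
  "eval1 r = fst r + snd r"

definition proj0 :: "(nat \<Rightarrow> ring_R) \<Rightarrow> (nat \<Rightarrow> 4)" where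
  "proj0 x = (\<lambda>i. fst (x i))"

definition proj1 :: "(nat \<Rightarrow> ring_R) \<Rightarrow> (nat \<Rightarrow> 4)" where
  "proj1 x = (\<lambda>i. eval1 (x i))"

definition glue :: "(nat \<Rightarrow> 4) \<Rightarrow> (nat \<Rightarrow> 4) \<Rightarrow> (nat \<Rightarrow> ring_R)" where
  "glue a b = (\<lambda>i. (a i, b i - a i))"

definition glued :: "nat \<Rightarrow> (nat \<Rightarrow> 4) set \<Rightarrow> (nat \<Rightarrow> 4) set \<Rightarrow> (nat \<Rightarrow> ring_R) set" where
  "glued n A B = {x \<in> Rvecs n. proj0 x \<in> A \<and> proj1 x \<in> B}"

lemma fst_rmul: "fst (rmul a b) = fst a * fst b"
  by (simp add: rmul_def)

lemma eval1_rmul: "eval1 (rmul a b) = eval1 a * eval1 b"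
  by (simp add: rmul_def eval1_def algebra_simps)

lemma eval1_add: "eval1 (a + b) = eval1 a + eval1 b"
  by (simp add: eval1_def algebra_simps)

lemma eval1_sum: "eval1 (sum f A) = (\<Sum>a\<in>A. eval1 (f a))"
  by (induction A rule: infinite_finite_induct) (simp_all add: eval1_add eval1_def)

lemma ring_R_eq_iff: "a = b \<longleftrightarrow> fst a = fst b \<and> eval1 a = eval1 (b :: ring_R)"
  by (auto simp: eval1_def prod_eq_iff)

lemma vec_R_eq_iff: "x = y \<longleftrightarrow> proj0 x = proj0 y \<and> proj1 x = proj1 y"
  by (auto simp: proj0_def proj1_def fun_eq_iff ring_R_eq_iff[of "x _"])

lemma proj0_glue [simp]: "proj0 (glue a b) = a"
  and proj1_glue [simp]: "proj1 (glue a b) = b"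
  by (simp_all add: proj0_def proj1_def glue_def eval1_def)

lemma proj_in_vecs: "x \<in> Rvecs n \<Longrightarrow> proj0 x \<in> vecs n \<and> proj1 x \<in> vecs n"
  by (simp add: Rvecs_def vecs_def proj0_def proj1_def eval1_def)

lemma glue_in_Rvecs: "a \<in> vecs n \<Longrightarrow> b \<in> vecs n \<Longrightarrow> glue a b \<in> Rvecs n"
  by (simp add: Rvecs_def vecs_def glue_def zero_prod_def)

lemma Rip_eq_0_iff: "Rip n x y = 0 \<longleftrightarrow> dot n (proj0 x) (proj0 y) = 0 \<and> dot n (proj1 x) (proj1 y) = 0"
  by (simp add: ring_R_eq_iff[of _ 0] Rip_def dot_def proj0_def proj1_def fst_sum eval1_sum
      fst_rmul eval1_rmul) (simp add: eval1_def)

lemma proj_add: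
  "proj0 (\<lambda>i. x i + y i) = proj0 x + proj0 y" "proj1 (\<lambda>i. x i + y i) = proj1 x + proj1 y"
  by (simp_all add: proj0_def proj1_def fun_eq_iff eval1_add)

lemma proj_rmul:
  "proj0 (\<lambda>i. rmul r (x i)) = smul (fst r) (proj0 x)" "proj1 (\<lambda>i. rmul r (x i)) = smul (eval1 r) (proj1 x)"
  by (simp_all add: proj0_def proj1_def smul_def fst_rmul eval1_rmul)

lemma proj_zero: "proj0 (\<lambda>i. 0) = 0" "proj1 (\<lambda>i. 0) = 0"
  by (simp_all add: proj0_def proj1_def eval1_def fun_eq_iff)

lemma rmul_zero_right [simp]: "rmul r 0 = 0"
  by (simp add: rmul_def zero_prod_def)

lemma R_linear_code_glued:
  assumes A: "code n A" and B: "code n B"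
  shows "R_linear_code n (glued n A B)"
  unfolding R_linear_code_def
proof (intro conjI ballI allI)
  show "glued n A B \<subseteq> Rvecs n"
    by (auto simp: glued_def)
  show "(\<lambda>i. 0) \<in> glued n A B"
    using A B by (simp add: glued_def proj_zero code_def Rvecs_def)
next
  fix x y
  assume "x \<in> glued n A B" "y \<in> glued n A B"
  then show "(\<lambda>i. x i + y i) \<in> glued n A B"
    using A B unfolding glued_def code_def by (simp add: proj_add Rvecs_def)
next
  fix r x
  assume "x \<in> glued n A B"
  then show "(\<lambda>i. rmul r (x i)) \<in> glued n A B"
    using A B unfolding glued_def code_def by (simp add: proj_rmul Rvecs_def)
qed

text \<open>The CRT idempotents \<open>1 - v = (1, 3)\<close> and \<open>v = (0, 1)\<close> recombine components of different codewords.\<close>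

lemma glued_proj:
  assumes C: "R_linear_code n C"
  shows "glued n (proj0 ` C) (proj1 ` C) = C"
proof
  have sub: "C \<subseteq> Rvecs n"
    and add: "\<And>x y. x \<in> C \<Longrightarrow> y \<in> C \<Longrightarrow> (\<lambda>i. x i + y i) \<in> C"
    and mul: "\<And>r x. x \<in> C \<Longrightarrow> (\<lambda>i. rmul r (x i)) \<in> C"
    using C unfolding R_linear_code_def by blast+
  show "C \<subseteq> glued n (proj0 ` C) (proj1 ` C)"
    using sub unfolding glued_def by blast
  show "glued n (proj0 ` C) (proj1 ` C) \<subseteq> C"
  proof
    fix x
    assume "x \<in> glued n (proj0 ` C) (proj1 ` C)"
    then obtain a b where ab: "a \<in> C" "b \<in> C" "proj0 x = proj0 a" "proj1 x = proj1 b"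
      unfolding glued_def by blast
    define z where "z = (\<lambda>i. rmul (1, 3) (a i) + rmul (0, 1) (b i))"
    have "z \<in> C"
      unfolding z_def by (intro add mul ab(1,2))
    moreover have "fst ((1, 3) :: ring_R) = 1" "fst ((0, 1) :: ring_R) = 0"
      "eval1 ((1, 3) :: ring_R) = 0" "eval1 ((0, 1) :: ring_R) = 1"
      by (simp_all add: eval1_def)
    then have "proj0 z = proj0 a" "proj1 z = proj1 b"
      unfolding z_def proj_add proj_rmul by simp_all
    ultimately show "x \<in> C"
      using ab vec_R_eq_iff[of x z] by simp
  qed
qed

lemma R_dual_glued:
  assumes A: "A \<subseteq> vecs n" "0 \<in> A" and B: "B \<subseteq> vecs n" "0 \<in> B"
  shows "R_dual n (glued n A B) = glued n (dual n A) (dual n B)"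
proof (intro equalityI subsetI)
  fix x
  assume "x \<in> R_dual n (glued n A B)"
  then have x: "x \<in> Rvecs n" and orth: "\<And>c. c \<in> glued n A B \<Longrightarrow> Rip n x c = 0"
    unfolding R_dual_def by blast+
  have "dot n (proj0 x) a = 0" if "a \<in> A" for a
  proof -
    have "glue a 0 \<in> glued n A B"
      using that A B by (simp add: glued_def glue_in_Rvecs subsetD)
    then show ?thesis
      using orth Rip_eq_0_iff by fastforce
  qed
  moreover have "dot n (proj1 x) b = 0" if "b \<in> B" for b
  proof -
    have "glue 0 b \<in> glued n A B"
      using that A B by (simp add: glued_def glue_in_Rvecs subsetD)
    then show ?thesis
      using orth Rip_eq_0_iff by fastforce
  qed
  ultimately show "x \<in> glued n (dual n A) (dual n B)"
    using x proj_in_vecs[OF x] unfolding glued_def dual_def by blast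
next
  fix x
  assume "x \<in> glued n (dual n A) (dual n B)"
  then show "x \<in> R_dual n (glued n A B)"
    unfolding R_dual_def glued_def dual_def Rip_eq_0_iff by blast
qed

lemma proj0_glued:
  assumes "A \<subseteq> vecs n" "0 \<in> B"
  shows "proj0 ` glued n A B = A"
proof
  show "proj0 ` glued n A B \<subseteq> A"
    unfolding glued_def by blast
  show "A \<subseteq> proj0 ` glued n A B"
  proof
    fix a
    assume "a \<in> A"
    then have "glue a 0 \<in> glued n A B"
      using assms by (simp add: glued_def glue_in_Rvecs subsetD)
    then show "a \<in> proj0 ` glued n A B"
      by (metis proj0_glue image_eqI)
  qed
qed

lemma proj1_glued:
  assumes "B \<subseteq> vecs n" "0 \<in> A"
  shows "proj1 ` glued n A B = B"
proof
  show "proj1 ` glued n A B \<subseteq> B"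
    unfolding glued_def by blast
  show "B \<subseteq> proj1 ` glued n A B"
  proof
    fix b
    assume "b \<in> B"
    then have "glue 0 b \<in> glued n A B"
      using assms by (simp add: glued_def glue_in_Rvecs subsetD)
    then show "b \<in> proj1 ` glued n A B"
      by (metis proj1_glue image_eqI)
  qed
qed

lemma self_dual_proj:
  assumes "C \<in> R_self_dual_codes n"
  shows "proj0 ` C \<in> self_dual_codes n" "proj1 ` C \<in> self_dual_codes n"
proof -
  have C: "R_linear_code n C" "R_dual n C = C"
    using assms unfolding R_self_dual_codes_def by auto
  let ?A = "proj0 ` C" and ?B = "proj1 ` C"
  have "C \<subseteq> Rvecs n" "(\<lambda>i. 0) \<in> C"
    using C(1) unfolding R_linear_code_def by blast+
  then have AB: "?A \<subseteq> vecs n" "0 \<in> ?A" "?B \<subseteq> vecs n" "0 \<in> ?B"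
    using proj_in_vecs proj_zero by (blast, metis image_eqI, blast, metis image_eqI)
  have "glued n (dual n ?A) (dual n ?B) = R_dual n (glued n ?A ?B)"
    by (rule R_dual_glued[OF AB, symmetric])
  also have "\<dots> = glued n ?A ?B"
    using glued_proj[OF C(1)] C(2) by simp
  finally have glued_eq: "glued n (dual n ?A) (dual n ?B) = glued n ?A ?B" .
  have "dual n ?A = ?A"
    using proj0_glued[OF dual_subset_vecs zero_in_dual] proj0_glued[OF AB(1,4)] glued_eq by metis
  moreover have "dual n ?B = ?B"
    using proj1_glued[OF dual_subset_vecs zero_in_dual] proj1_glued[OF AB(3,2)] glued_eq by metis
  ultimately show "?A \<in> self_dual_codes n" "?B \<in> self_dual_codes n"
    by (simp_all add: self_dual_codes_def)
qed

lemma glued_R_self_dual: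
  assumes "A \<in> self_dual_codes n" "B \<in> self_dual_codes n"
  shows "glued n A B \<in> R_self_dual_codes n"
proof -
  have "code n A" "code n B" "dual n A = A" "dual n B = B"
    using assms code_self_dual by (simp_all add: self_dual_codes_def)
  then show ?thesis
    using R_linear_code_glued R_dual_glued[of A n B] by (simp add: R_self_dual_codes_def code_def)
qed

lemma R_self_dual_codes_eq:
  "R_self_dual_codes n = (\<lambda>(A, B). glued n A B) ` (self_dual_codes n \<times> self_dual_codes n)"
proof (intro equalityI subsetI)
  fix C
  assume C: "C \<in> R_self_dual_codes n"
  then have "C = glued n (proj0 ` C) (proj1 ` C)"
    using glued_proj by (simp add: R_self_dual_codes_def)
  then show "C \<in> (\<lambda>(A, B). glued n A B) ` (self_dual_codes n \<times> self_dual_codes n)"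
    using self_dual_proj[OF C] by (auto intro: image_eqI[where x = "(proj0 ` C, proj1 ` C)"])
next
  fix C
  assume "C \<in> (\<lambda>(A, B). glued n A B) ` (self_dual_codes n \<times> self_dual_codes n)"
  then show "C \<in> R_self_dual_codes n"
    using glued_R_self_dual by auto
qed

lemma card_R_self_dual_codes:
  "card (R_self_dual_codes n) = card (self_dual_codes n :: (nat \<Rightarrow> 4) set set) ^ 2"
proof -
  have "inj_on (\<lambda>(A, B). glued n A B) (self_dual_codes n \<times> self_dual_codes n)"
  proof (rule inj_onI, clarify)
    fix A B A' B'
    assume "A \<in> self_dual_codes n" "B \<in> self_dual_codes n"
      "A' \<in> self_dual_codes n" "B' \<in> self_dual_codes n" and eq: "glued n A B = glued n A' B'"
    then have "A \<subseteq> vecs n \<and> 0 \<in> A" "B \<subseteq> vecs n \<and> 0 \<in> B"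
      "A' \<subseteq> vecs n \<and> 0 \<in> A'" "B' \<subseteq> vecs n \<and> 0 \<in> B'"
      using code_self_dual unfolding code_def by blast+
    then show "A = A' \<and> B = B'"
      using eq proj0_glued proj1_glued by metis
  qed
  then show ?thesis
    by (simp add: R_self_dual_codes_eq card_image card_cartesian_product power2_eq_square)
qed

theorem theorem6:
  fixes n :: nat
  shows "card (R_self_dual_codes n) =
         (\<Sum>k = 0..n div 2. nu n k * 2 ^ (k * (k + 1) div 2)) ^ 2"
  by (simp add: card_R_self_dual_codes card_self_dual_codes_4)

end
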